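(* If $(X,Q)$ is an $\varepsilon$-representative sequence for a $c$-expensive ($c>0$), oddly- or evenly-priced mechanism $M$ and a distribution $\mathcal{D}$, then for every index $i\ge1$, $\mathrm{gap}_i^{X,Q}\ge p^M(\vec x_i)/2$.
   Context: A mechanism $M$ is a set of options $(\vec q,p)$, $\vec q\in[0,1]^k$, $p\in\mathbb{R}$, containing $(\vec0,0)$; a buyer with values $\vec v\in\mathbb{R}^k_{\ge0}$ selects an option maximizing $\vec v\cdot\vec q-p$, with price $p^M(\vec v)$ and allocation $\vec q^M(\vec v)$. $M$ is $c$-expensive if every non-null option has price $\ge c$; oddly-priced (resp. evenly-priced) if every non-null option price lies in $[c2^i,c2^{i+1})$ for an odd (resp. even) integer $i$. $\varepsilon$-representative sequence: $\vec q_0=\vec0$; $a=1$ if oddly-priced, $a=0$ if evenly-priced; $B_j:=\{\vec v\in\mathrm{supp}(\mathcal{D}):p^M(\vec v)\in[c2^{2(j-1)+a},c2^{2(j-1)+a+1})\}$; for nonempty $B_j$ pick $\vec x_j\in B_j$ with $\|\vec x_j\|_1\le(1+\varepsilon)\|\vec v\|_1$ for all $\vec v\in B_j$ and $\vec q_j:=\vec q^M(\vec x_j)$; empty buckets omitted, indices shifted. $\mathrm{gap}_i^{X,Q}:=\min_{0\le j<i}(\vec q_i-\vec q_j)\cdot\vec x_i$. *)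

theory Defs
  imports "HOL-Analysis.Analysis"
begin

text \<open>An option is a pair (allocation vector, price). A mechanism is a set of options.\<close>
type_synonym 'k option_m = "(real ^ 'k) \<times> real"

definition is_mechanism :: "'k::finite option_m set \<Rightarrow> bool" where
  "is_mechanism M \<longleftrightarrow> (0, 0) \<in> M \<and>
     (\<forall>(q, p) \<in> M. \<forall>i. 0 \<le> q $ i \<and> q $ i \<le> 1)"

definition is_choice :: "'k::finite option_m set \<Rightarrow> (real ^ 'k) set \<Rightarrow> (real ^ 'k \<Rightarrow> 'k option_m) \<Rightarrow> bool" where
  "is_choice M S choice \<longleftrightarrow> (\<forall>v \<in> S. choice v \<in> M \<and>
     (\<forall>(q, p) \<in> M. v \<bullet> q - p \<le> v \<bullet> fst (choice v) - snd (choice v)))"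

definition c_expensive :: "real \<Rightarrow> 'k::finite option_m set \<Rightarrow> bool" where
  "c_expensive c M \<longleftrightarrow> (\<forall>(q, p) \<in> M. (q, p) \<noteq> (0, 0) \<longrightarrow> c \<le> p)"

definition oddly_priced :: "real \<Rightarrow> 'k::finite option_m set \<Rightarrow> bool" where
  "oddly_priced c M \<longleftrightarrow> (\<forall>(q, p) \<in> M. (q, p) \<noteq> (0, 0) \<longrightarrow>
     (\<exists>i::int. odd i \<and> c * 2 powr (of_int i) \<le> p \<and> p < c * 2 powr (of_int i + 1)))"

definition evenly_priced :: "real \<Rightarrow> 'k::finite option_m set \<Rightarrow> bool" where
  "evenly_priced c M \<longleftrightarrow> (\<forall>(q, p) \<in> M. (q, p) \<noteq> (0, 0) \<longrightarrow>
     (\<exists>i::int. even i \<and> c * 2 powr (of_int i) \<le> p \<and> p < c * 2 powr (of_int i + 1)))"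

definition norm1 :: "real ^ 'k::finite \<Rightarrow> real" where
  "norm1 v = (\<Sum>i\<in>UNIV. \<bar>v $ i\<bar>)"

definition bucket :: "(real ^ 'k::finite \<Rightarrow> 'k option_m) \<Rightarrow> (real ^ 'k) set \<Rightarrow> real \<Rightarrow> nat \<Rightarrow> nat \<Rightarrow> (real ^ 'k) set" where
  "bucket choice S c a j = {v \<in> S.
     c * 2 powr (real (2 * (j - 1) + a)) \<le> snd (choice v) \<and>
     snd (choice v) < c * 2 powr (real (2 * (j - 1) + a + 1))}"

definition nonempty_buckets :: "(real ^ 'k::finite \<Rightarrow> 'k option_m) \<Rightarrow> (real ^ 'k) set \<Rightarrow> real \<Rightarrow> nat \<Rightarrow> nat set" where
  "nonempty_buckets choice S c a = {j. 1 \<le> j \<and> bucket choice S c a j \<noteq> {}}"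

text \<open>Index set {1..n} of the representative sequence after omitting empty buckets
  (all positive integers if there are infinitely many nonempty buckets).\<close>
definition seq_indices :: "nat set \<Rightarrow> nat set" where
  "seq_indices J = (if finite J then {1..card J} else {1..})"

text \<open>(X, Q) is an eps-representative sequence; b i is the (original) bucket index of the
  i-th element, enumerating the nonempty buckets in increasing order.\<close>
definition eps_representative ::
  "real \<Rightarrow> (real ^ 'k::finite \<Rightarrow> 'k option_m) \<Rightarrow> (real ^ 'k) set \<Rightarrow> real \<Rightarrow> nat \<Rightarrow>
   (nat \<Rightarrow> real ^ 'k) \<Rightarrow> (nat \<Rightarrow> real ^ 'k) \<Rightarrow> bool" where
  "eps_representative eps choice S c a X Q \<longleftrightarrow>
     Q 0 = 0 \<and>
     (\<exists>b :: nat \<Rightarrow> nat.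
        strict_mono_on (seq_indices (nonempty_buckets choice S c a)) b \<and>
        b ` seq_indices (nonempty_buckets choice S c a) = nonempty_buckets choice S c a \<and>
        (\<forall>i \<in> seq_indices (nonempty_buckets choice S c a).
           X i \<in> bucket choice S c a (b i) \<and>
           (\<forall>v \<in> bucket choice S c a (b i). norm1 (X i) \<le> (1 + eps) * norm1 v) \<and>
           Q i = fst (choice (X i))))"

definition gap :: "(nat \<Rightarrow> real ^ 'k::finite) \<Rightarrow> (nat \<Rightarrow> real ^ 'k) \<Rightarrow> nat \<Rightarrow> real" where
  "gap X Q i = Min ((\<lambda>j. (Q i - Q j) \<bullet> X i) ` {0..<i})"

end

theory Submission
  imports Defs
begin

text \<open>Compare the option chosen at \<open>x\<^sub>i\<close> with every earlier option \<open>q\<^sub>j\<close>.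
  Against the null option \<open>q\<^sub>0\<close>, individual rationality gives
  \<open>(q\<^sub>i - q\<^sub>0)\<cdot>x\<^sub>i \<ge> p(x\<^sub>i)\<close>. For \<open>j \<ge> 1\<close>, utility maximisation at \<open>x\<^sub>i\<close> gives
  \<open>(q\<^sub>i - q\<^sub>j)\<cdot>x\<^sub>i \<ge> p(x\<^sub>i) - p(x\<^sub>j)\<close>; since \<open>x\<^sub>j\<close> lies in a strictly lower bucket and buckets
  of the same parity are separated by a factor 2 in price, \<open>p(x\<^sub>j) < p(x\<^sub>i)/2\<close>.
  The price ranges are built into the buckets.\<close>

lemma choice_price_le_inner_diff:
  assumes "is_choice M S choice" and "v \<in> S" and "(q, p) \<in> M"
  shows "snd (choice v) - p \<le> (fst (choice v) - q) \<bullet> v"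
proof -
  have "v \<bullet> q - p \<le> v \<bullet> fst (choice v) - snd (choice v)"
    using assms unfolding is_choice_def by fastforce
  then show ?thesis
    by (simp add: inner_diff_left inner_diff_right inner_commute[of v])
qed

lemma bucket_price_pos:
  assumes "c > 0" and "v \<in> bucket choice S c a j"
  shows "0 < snd (choice v)"
  using assms unfolding bucket_def
  by (smt (verit) mem_Collect_eq mult_pos_pos powr_gt_zero)

lemma bucket_price_lt_half:
  assumes "c > 0" and "1 \<le> k" and "k < j"
    and "w \<in> bucket choice S c a k" and "v \<in> bucket choice S c a j"
  shows "snd (choice w) < snd (choice v) / 2"
proof -
  have "real (2 * (k - 1) + a + 1) \<le> real (2 * (j - 1) + a) - 1"
    using assms(2,3) by simp
  then have "c * 2 powr (real (2 * (k - 1) + a + 1)) \<le> c * 2 powr (real (2 * (j - 1) + a) - 1)"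
    using assms(1) by (intro mult_left_mono) auto
  also have "\<dots> = c * 2 powr (real (2 * (j - 1) + a)) / 2"
    by (simp add: powr_diff)
  finally show ?thesis
    using assms(4,5) unfolding bucket_def by auto
qed

lemma seq_indices_iff: "i \<in> seq_indices J \<longleftrightarrow> 1 \<le> i \<and> (finite J \<longrightarrow> i \<le> card J)"
  by (auto simp: seq_indices_def)

lemma eps_representative_in_bucket:
  assumes "eps_representative eps choice S c a X Q"
    and "i \<in> seq_indices (nonempty_buckets choice S c a)"
  obtains k where "1 \<le> k" and "X i \<in> bucket choice S c a k" and "Q i = fst (choice (X i))"
  using assms unfolding eps_representative_def nonempty_buckets_def by blast

lemma eps_representative_earlier_bucket:
  assumes "eps_representative eps choice S c a X Q"
    and "i \<in> seq_indices (nonempty_buckets choice S c a)" and "1 \<le> j" and "j < i"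
  obtains k l where "1 \<le> k" and "k < l"
    and "X j \<in> bucket choice S c a k" and "Q j = fst (choice (X j))"
    and "X i \<in> bucket choice S c a l"
proof -
  let ?I = "seq_indices (nonempty_buckets choice S c a)"
  obtain b where mono: "strict_mono_on ?I b" and img: "b ` ?I = nonempty_buckets choice S c a"
    and elem: "\<And>n. n \<in> ?I \<Longrightarrow> X n \<in> bucket choice S c a (b n) \<and> Q n = fst (choice (X n))"
    using assms(1) unfolding eps_representative_def by blast
  have "j \<in> ?I"
    using assms(2-4) by (auto simp: seq_indices_iff)
  moreover from this have "1 \<le> b j"
    using img unfolding nonempty_buckets_def by blast
  moreover have "b j < b i"
    using mono \<open>j \<in> ?I\<close> assms(2,4) by (simp add: strict_mono_on_def)
  ultimately show thesis
    using that elem assms(2) by blast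
qed

theorem claim4p8:
  fixes M :: "('k::finite) option_m set"
    and choice :: "real ^ 'k \<Rightarrow> 'k option_m"
    and S :: "(real ^ 'k) set"
    and c eps :: real and a :: nat
    and X Q :: "nat \<Rightarrow> real ^ 'k"
  assumes "is_mechanism M"
    and "c > 0"
    and "eps > 0"
    and "c_expensive c M"
    and "(a = 1 \<and> oddly_priced c M) \<or> (a = 0 \<and> evenly_priced c M)"
    and "\<forall>v \<in> S. \<forall>i. 0 \<le> v $ i"
    and "is_choice M S choice"
    and "eps_representative eps choice S c a X Q"
    and "i \<in> seq_indices (nonempty_buckets choice S c a)"
  shows "gap X Q i \<ge> snd (choice (X i)) / 2"
proof -
  obtain l where Bi: "X i \<in> bucket choice S c a l" and Qi: "Q i = fst (choice (X i))"
    using eps_representative_in_bucket[OF assms(8,9)] .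
  have Xi: "X i \<in> S"
    using Bi by (simp add: bucket_def)
  have pos: "0 < snd (choice (X i))"
    using bucket_price_pos[OF assms(2) Bi] .
  have "snd (choice (X i)) / 2 \<le> (Q i - Q j) \<bullet> X i" if ji: "j < i" for j
  proof (cases "j = 0")
    case True
    have "(0, 0) \<in> M" and "Q 0 = 0"
      using assms(1,8) by (auto simp: is_mechanism_def eps_representative_def)
    then show ?thesis
      using choice_price_le_inner_diff[OF assms(7) Xi] True Qi pos by fastforce
  next
    case False
    then obtain k l where "1 \<le> k" "k < l" and Xj: "X j \<in> bucket choice S c a k"
      and Qj: "Q j = fst (choice (X j))" and "X i \<in> bucket choice S c a l"
      using eps_representative_earlier_bucket[OF assms(8,9) _ ji] by auto
    then have "snd (choice (X j)) < snd (choice (X i)) / 2"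
      using bucket_price_lt_half[OF assms(2)] by blast
    moreover have "(Q j, snd (choice (X j))) \<in> M"
      using assms(7) Xj Qj by (auto simp: is_choice_def bucket_def)
    ultimately show ?thesis
      using choice_price_le_inner_diff[OF assms(7) Xi] Qi by fastforce
  qed
  moreover have "0 < i"
    using assms(9) by (simp add: seq_indices_iff)
  ultimately show ?thesis
    unfolding gap_def by (subst Min_ge_iff) auto
qed

end
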